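(* Let $A^*\in\mathbb C^{N\times n}$ be isometric ($AA^*=I_n$), let $\mathcal X=\mathbb R^n$ or $\mathcal X=\mathbb R^n_+$, let $x_0\in\mathcal X\setminus\{0\}$, $b=|A^*x_0|$, and let $\mathcal F(x)=\big[A\big(b\odot\frac{A^*x}{|A^*x|}\big)\big]_{\mathcal X}$. Suppose $$\tilde\lambda_2:=\max\{\|\Im(B^* )u\|:\ u\in\mathbb R^n,\ \langle u,x_0\rangle=0,\ \|u\|=1\}<1.$$ Then for every $0<\epsilon<1-\tilde\lambda_2^2$ there is a neighborhood of $x_0$ such that for every $x^{(1)}$ in it, the iterates $x^{(k+1)}=\mathcal F^k(x^{(1)})$ satisfy $$\|\alpha^{(k+1)}x^{(k+1)}-x_0\|\le(\tilde\lambda_2^2+\epsilon)\|\alpha^{(k)}x^{(k)}-x_0\|\quad\text{for all }k\ge1,$$ where $\alpha^{(k)}:=\arg\min_{\alpha\in\{\pm1\}}\|\alpha x^{(k)}-x_0\|$, and $\alpha^{(k)}:=1$ if $\mathcal X=\mathbb R^n_+$.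
   Context: $|y|$ is the componentwise modulus, $\odot$ the componentwise product, $y/|y|$ the componentwise quotient with convention $y(j)/|y(j)|=1$ if $y(j)=0$. $[\cdot]_{\mathcal X}$ is Euclidean projection onto $\mathcal X$ (for $\mathcal X=\mathbb R^n$: $x\mapsto\Re x$; for $\mathbb R^n_+$: $x\mapsto\max(\Re x,0)$ componentwise). $B:=A\,\mathrm{diag}\big(\frac{A^*x_0}{|A^*x_0|}\big)$ and $\Im(B^* )$ is its entrywise imaginary part. *)

theory Defs
  imports "HOL-Analysis.Analysis"
begin

definition cvec :: "real^'n \<Rightarrow> complex^'n" where
  "cvec x = (\<chi> i. complex_of_real (x $ i))"

definition adj :: "complex^'b^'a \<Rightarrow> complex^'a^'b" where
  "adj M = (\<chi> i j. cnj (M $ j $ i))"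

definition cabs :: "complex^'n \<Rightarrow> real^'n" where
  "cabs y = (\<chi> j. cmod (y $ j))"

definition cphase :: "complex^'n \<Rightarrow> complex^'n" where
  "cphase y = (\<chi> j. if y $ j = 0 then 1 else y $ j / complex_of_real (cmod (y $ j)))"

text \<open>Constraint set X: pos = False means X = R^n, pos = True means X = R^n_+.\<close>
definition inX :: "bool \<Rightarrow> real^'n \<Rightarrow> bool" where
  "inX pos x = (pos \<longrightarrow> (\<forall>i. 0 \<le> x $ i))"

definition projX :: "bool \<Rightarrow> complex^'n \<Rightarrow> real^'n" where
  "projX pos z = (\<chi> i. if pos then max (Re (z $ i)) 0 else Re (z $ i))"

definition PR_map :: "bool \<Rightarrow> complex^'N^'n \<Rightarrow> real^'n \<Rightarrow> real^'n \<Rightarrow> real^'n" where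
  "PR_map pos A x0 x =
     projX pos (A *v (\<chi> j. complex_of_real (cabs (adj A *v cvec x0) $ j)
                            * cphase (adj A *v cvec x) $ j))"

text \<open>B = A diag(A^* x0 / |A^* x0|).\<close>
definition Bmat :: "complex^'N^'n \<Rightarrow> real^'n \<Rightarrow> complex^'N^'n" where
  "Bmat A x0 = (\<chi> i j. A $ i $ j * cphase (adj A *v cvec x0) $ j)"

definition ImBadj :: "complex^'N^'n \<Rightarrow> real^'n \<Rightarrow> real^'n^'N" where
  "ImBadj A x0 = (\<chi> j i. Im (adj (Bmat A x0) $ j $ i))"

text \<open>lambda_2 tilde: maximum of ||Im(B^*) u|| over unit u orthogonal to x0.
  (Sup with 0 inserted: equals the max when the set is nonempty, and 0 when n = 1.)\<close>
definition lambda2 :: "complex^'N^'n \<Rightarrow> real^'n \<Rightarrow> real" where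
  "lambda2 A x0 = Sup (insert 0 ((\<lambda>u. norm (ImBadj A x0 *v u)) ` {u. inner u x0 = 0 \<and> norm u = 1}))"

definition alpha_sel :: "bool \<Rightarrow> real^'n \<Rightarrow> real^'n \<Rightarrow> real" where
  "alpha_sel pos x0 x = (if pos then 1 else if norm (x - x0) \<le> norm ((-1) *\<^sub>R x - x0) then 1 else -1)"

end

theory Submission
  imports Defs
begin

text \<open>Write \<open>A\<^sup>* x = A\<^sup>* x0 + d\<close>. On the support of \<open>b = |A\<^sup>* x0|\<close>, the map
  \<open>d \<mapsto> b \<odot> (A\<^sup>* x0 + d)/|A\<^sup>* x0 + d|\<close> equals \<open>A\<^sup>* x0\<close> plus its linear part, which keeps only the
  component of \<open>d\<close> orthogonal to the phase of \<open>A\<^sup>* x0\<close>, up to an error \<open>O(|d|\<^sup>2 / min b)\<close>.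
  After applying \<open>A\<close> and taking real parts the linear part becomes \<open>S\<^sup>T S (x - x0)\<close>, where \<open>S\<close> is
  \<open>Im(B\<^sup>*)\<close> restricted to the support of \<open>b\<close>. As \<open>Im(B\<^sup>*) x0 = 0\<close>, the operator norm of \<open>S\<close>
  is at most \<open>\<lambda>\<^sub>2\<close>, so \<open>\<parallel>F x - x0\<parallel> \<le> \<lambda>\<^sub>2\<^sup>2 \<parallel>x - x0\<parallel> + O(\<parallel>x - x0\<parallel>\<^sup>2)\<close>; the projection onto
  \<open>\<X>\<close> only moves points closer to \<open>x0 \<in> \<X>\<close>. Hence \<open>F\<close> contracts a small ball around \<open>x0\<close> by the
  factor \<open>\<lambda>\<^sub>2\<^sup>2 + \<epsilon>\<close>, the iterates never leave it, and inside it the sign \<open>\<alpha>\<close> is always \<open>1\<close>.\<close>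

lemma adj_adj [simp]: "adj (adj A) = A"
  by (simp add: adj_def vec_eq_iff)

lemma inner_matrix_vector_adj:
  fixes A :: "complex^'m^'n"
  shows "inner (A *v w) v = inner w (adj A *v v)"
proof -
  have "inner (A *v w) v = (\<Sum>i\<in>UNIV. \<Sum>j\<in>UNIV. inner (A$i$j * w$j) (v$i))"
    by (simp add: inner_vec_def matrix_vector_mult_def inner_sum_left inner_complex_def
        sum_distrib_left sum_subtractf sum.distrib[symmetric] algebra_simps)
  also have "\<dots> = (\<Sum>j\<in>UNIV. \<Sum>i\<in>UNIV. inner (A$i$j * w$j) (v$i))"
    by (rule sum.swap)
  also have "\<dots> = inner w (adj A *v v)"
    by (simp add: inner_vec_def matrix_vector_mult_def adj_def inner_sum_right inner_complex_def
        sum_distrib_left sum_subtractf sum.distrib[symmetric] algebra_simps)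
  finally show ?thesis .
qed

lemma norm_adj_mult_isometry:
  fixes A :: "complex^'m^'n"
  assumes iso: "A ** adj A = mat 1"
  shows "norm (adj A *v v) = norm v"
proof -
  have "(norm (adj A *v v))\<^sup>2 = inner v (A *v (adj A *v v))"
    by (simp add: power2_norm_eq_inner inner_matrix_vector_adj inner_commute)
  also have "\<dots> = (norm v)\<^sup>2"
    by (simp add: matrix_vector_mul_assoc iso power2_norm_eq_inner)
  finally show ?thesis by (simp add: power2_eq_iff_nonneg)
qed

lemma norm_mult_coisometry_le:
  fixes A :: "complex^'m^'n"
  assumes iso: "A ** adj A = mat 1"
  shows "norm (A *v w) \<le> norm w"
proof -
  have "(norm (A *v w))\<^sup>2 = inner w (adj A *v (A *v w))"
    by (simp add: power2_norm_eq_inner inner_matrix_vector_adj)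
  also have "\<dots> \<le> norm w * norm (A *v w)"
    using norm_cauchy_schwarz norm_adj_mult_isometry[OF iso] by metis
  finally show ?thesis
    by (cases "A *v w = 0") (auto simp: power2_eq_square mult_le_cancel_right)
qed

lemma cmod_sgn_linearization:
  fixes t :: complex and b :: real
  assumes b: "0 < b" and t: "cmod t \<le> b / 2"
  shows "cmod (b * sgn (b + t) - b - \<i> * Im t) \<le> 4 * (cmod t)\<^sup>2 / b"
proof -
  define s where "s = b + t"
  define \<rho> where "\<rho> = cmod s"
  define w where "w = b * sgn s - b - \<i> * Im t"
  have s: "Re s = b + Re t" "Im s = Im t" by (simp_all add: s_def)
  have Re_t: "\<bar>Re t\<bar> \<le> cmod t" and Im_t: "\<bar>Im t\<bar> \<le> cmod t"
    by (simp_all add: abs_Re_le_cmod abs_Im_le_cmod)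
  have \<rho>_b: "\<bar>b - \<rho>\<bar> \<le> cmod t"
    using norm_triangle_ineq3[of s "of_real b"] b by (simp add: \<rho>_def s_def abs_minus_commute)
  have \<rho>_ge: "b / 2 \<le> \<rho>" and Re_s: "b / 2 \<le> Re s"
    using \<rho>_b Re_t s t by linarith+
  have \<rho>_Re: "0 \<le> \<rho> - Re s"
    using complex_Re_le_cmod[of s] by (simp add: \<rho>_def)
  \<comment> \<open>\<open>\<rho> - Re s = (Im t)\<^sup>2 / (\<rho> + Re s)\<close> is quadratically small\<close>
  have "(\<rho> - Re s) * b \<le> (\<rho> - Re s) * (\<rho> + Re s)"
    using \<rho>_Re \<rho>_ge Re_s by (intro mult_left_mono) auto
  also have "\<dots> = (Im t)\<^sup>2"
    using cmod_power2[of s] s by (simp add: \<rho>_def power2_eq_square algebra_simps)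
  also have "\<dots> \<le> (cmod t)\<^sup>2"
    using Im_t by (simp add: power2_le_iff_abs_le)
  finally have \<rho>_Re_le: "(\<rho> - Re s) * b \<le> (cmod t)\<^sup>2" .
  have \<rho>: "0 < \<rho>" using \<rho>_ge b by linarith
  have Re_w_eq: "Re w = b * (Re s - \<rho>) / \<rho>" and Im_w_eq: "Im w = Im t * (b - \<rho>) / \<rho>"
    using \<rho> s by (simp_all add: w_def sgn_eq \<rho>_def field_simps)
  have "\<bar>Re w\<bar> = b * (\<rho> - Re s) / \<rho>"
    using Re_w_eq \<rho> \<rho>_Re b by (simp add: abs_mult abs_minus_commute)
  also have "\<dots> \<le> (cmod t)\<^sup>2 / (b / 2)"
    using \<rho>_Re_le \<rho>_ge b \<rho>_Re by (intro frac_le) (auto simp: mult.commute)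
  finally have Re_w: "\<bar>Re w\<bar> \<le> 2 * (cmod t)\<^sup>2 / b" by (simp add: mult.commute)
  have "\<bar>Im w\<bar> = \<bar>Im t\<bar> * \<bar>b - \<rho>\<bar> / \<rho>"
    using Im_w_eq \<rho> by (simp add: abs_mult)
  also have "\<dots> \<le> (cmod t * cmod t) / (b / 2)"
    using mult_mono[OF Im_t \<rho>_b] \<rho>_ge b by (intro frac_le) auto
  finally have Im_w: "\<bar>Im w\<bar> \<le> 2 * (cmod t)\<^sup>2 / b" by (simp add: power2_eq_square mult.commute)
  have "cmod w \<le> \<bar>Re w\<bar> + \<bar>Im w\<bar>" by (rule cmod_le)
  with Re_w Im_w show ?thesis by (simp add: w_def s_def)
qed

lemma cmod_sgn_rotated_linearization:
  fixes ph d :: complex and b :: real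
  assumes ph: "cmod ph = 1" and b: "0 < b" and d: "cmod d \<le> b / 2"
  shows "cmod (b * sgn (ph * b + d) - ph * b - ph * (\<i> * Im (cnj ph * d))) \<le> 4 * (cmod d)\<^sup>2 / b"
proof -
  define t where "t = cnj ph * d"
  have ph_cnj: "ph * cnj ph = 1"
    using ph by (metis complex_norm_square mult.commute of_real_1 power_one)
  have t: "cmod t = cmod d" using ph by (simp add: t_def norm_mult)
  have "ph * b + d = ph * (b + t)" using ph_cnj by (simp add: t_def algebra_simps)
  moreover have "sgn ph = ph" using ph by (simp add: sgn_eq)
  ultimately have "sgn (ph * b + d) = ph * sgn (b + t)" by (simp add: sgn_mult)
  then have "b * sgn (ph * b + d) - ph * b - ph * (\<i> * Im (cnj ph * d))
      = ph * (b * sgn (b + t) - b - \<i> * Im t)"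
    by (simp add: t_def algebra_simps)
  then have "cmod (b * sgn (ph * b + d) - ph * b - ph * (\<i> * Im (cnj ph * d)))
      = cmod (b * sgn (b + t) - b - \<i> * Im t)"
    using ph by (simp add: norm_mult)
  also have "\<dots> \<le> 4 * (cmod t)\<^sup>2 / b"
    using b d t by (intro cmod_sgn_linearization) auto
  finally show ?thesis by (simp only: t)
qed

lemma norm_transpose_mult_le:
  fixes S :: "real^'n^'m"
  assumes S: "\<And>v. norm (S *v v) \<le> l * norm v" and l: "0 \<le> l"
  shows "norm (transpose S *v (S *v e)) \<le> l\<^sup>2 * norm e"
proof -
  define w where "w = S *v e"
  define v where "v = transpose S *v w"
  have "(norm v)\<^sup>2 = inner w (S *v v)"
    by (simp add: v_def power2_norm_eq_inner dot_lmul_matrix)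
  also have "\<dots> \<le> norm w * (l * norm v)"
    using norm_cauchy_schwarz S norm_ge_zero order_trans mult_left_mono by metis
  finally have "norm v \<le> l * norm w"
    by (cases "v = 0") (auto simp: power2_eq_square mult_ac l)
  also have "\<dots> \<le> l * (l * norm e)"
    using S[of e] l unfolding w_def by (rule mult_left_mono)
  finally show ?thesis by (simp add: v_def w_def power2_eq_square mult_ac)
qed

text \<open>If \<open>M\<close> annihilates \<open>x0\<close>, only the component of a vector orthogonal to \<open>x0\<close> matters; the
  \<open>0\<close> in the supremum covers the one-dimensional case, where no unit vector is orthogonal to \<open>x0\<close>.\<close>

lemma norm_matrix_vector_le_orthogonal_Sup:
  fixes M :: "real^'n^'m" and x0 :: "real^'n"
  assumes x0: "x0 \<noteq> 0" and Mx0: "M *v x0 = 0"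
  defines "l \<equiv> Sup (insert 0 ((\<lambda>u. norm (M *v u)) ` {u. inner u x0 = 0 \<and> norm u = 1}))"
  shows "0 \<le> l" and "norm (M *v e) \<le> l * norm e"
proof -
  obtain K where K: "\<And>x. norm (M *v x) \<le> norm x * K"
    using bounded_linear.bounded[OF matrix_vector_mul_bounded_linear[of M]] by blast
  have bdd: "bdd_above (insert 0 ((\<lambda>u. norm (M *v u)) ` {u. inner u x0 = 0 \<and> norm u = 1}))"
    using K by (intro bdd_aboveI[of _ "max 0 K"]) (auto simp: le_max_iff_disj intro: order_trans[OF K])
  show l0: "0 \<le> l" unfolding l_def by (rule cSup_upper[OF insertI1 bdd])
  have unit: "norm (M *v u) \<le> l" if "inner u x0 = 0" "norm u = 1" for u
    unfolding l_def using that by (intro cSup_upper[OF _ bdd]) auto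
  define c where "c = inner e x0 / inner x0 x0"
  define p where "p = e - c *\<^sub>R x0"
  have px0: "inner p x0 = 0" using x0 by (simp add: p_def c_def inner_diff_left)
  have Mp: "M *v e = M *v p"
    by (simp add: p_def matrix_vector_mult_diff_distrib matrix_vector_mult_scaleR Mx0)
  have "(norm e)\<^sup>2 = (norm p)\<^sup>2 + (norm (c *\<^sub>R x0))\<^sup>2"
    using norm_add_Pythagorean[of p "c *\<^sub>R x0"] px0 by (simp add: p_def orthogonal_def)
  then have "(norm p)\<^sup>2 \<le> (norm e)\<^sup>2" by simp
  then have pe: "norm p \<le> norm e" by (rule power2_le_imp_le) simp
  show "norm (M *v e) \<le> l * norm e"
  proof (cases "p = 0")
    case True
    with Mp l0 show ?thesis by simp
  next
    case False
    then have "norm (M *v (p /\<^sub>R norm p)) \<le> l"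
      using px0 by (intro unit) auto
    then have "norm (M *v p) \<le> l * norm p"
      using False by (simp add: matrix_vector_mult_scaleR field_simps)
    also have "\<dots> \<le> l * norm e" using pe l0 by (rule mult_left_mono)
    finally show ?thesis using Mp by simp
  qed
qed

abbreviation analysis :: "complex^'N^'n \<Rightarrow> real^'n \<Rightarrow> complex^'N" where
  "analysis A x \<equiv> adj A *v cvec x"

lemma cvec_diff: "cvec (x - y) = cvec x - cvec y"
  by (simp add: cvec_def vec_eq_iff)

lemma norm_cvec: "norm (cvec x) = norm x"
  by (simp add: cvec_def norm_vec_def)

lemma norm_cphase_nth: "cmod (cphase y $ j) = 1"
  by (simp add: cphase_def norm_divide)

lemma cphase_mult_cabs_nth: "cphase y $ j * cabs y $ j = y $ j"
  by (simp add: cphase_def cabs_def)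

lemma cnj_cphase_mult_nth: "cnj (cphase y $ j) * y $ j = cabs y $ j"
  by (cases "y $ j = 0")
    (simp_all add: cphase_def cabs_def complex_norm_square[symmetric] power2_eq_square mult.commute)

text \<open>The \<open>1\<close> keeps the minimum positive when \<open>v\<close> has no positive entry.\<close>

definition min_pos_entry :: "real^'n \<Rightarrow> real" where
  "min_pos_entry v = Min (insert 1 ((\<lambda>j. v $ j) ` {j. 0 < v $ j}))"

lemma min_pos_entry_pos: "0 < min_pos_entry v"
  unfolding min_pos_entry_def by (subst Min_gr_iff) auto

lemma min_pos_entry_le: "0 < v $ j \<Longrightarrow> min_pos_entry v \<le> v $ j"
  unfolding min_pos_entry_def by (rule Min_le) auto

lemma Im_cnj_cphase_mult_analysis:
  "Im (cnj (cphase (analysis A x0) $ j) * analysis A v $ j) = (ImBadj A x0 *v v) $ j"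
proof -
  define ph where "ph = cphase (analysis A x0) $ j"
  have "cnj ph * analysis A v $ j = (\<Sum>k\<in>UNIV. cnj (A $ k $ j * ph) * v $ k)"
    by (simp add: matrix_vector_mult_def adj_def cvec_def sum_distrib_left mult_ac)
  then have "Im (cnj ph * analysis A v $ j) = (\<Sum>k\<in>UNIV. Im (cnj (A $ k $ j * ph)) * v $ k)"
    by (simp add: Im_sum)
  then show ?thesis
    by (simp add: ImBadj_def Bmat_def adj_def matrix_vector_mult_def ph_def)
qed

lemma ImBadj_mult_x0: "ImBadj A x0 *v x0 = 0"
  using Im_cnj_cphase_mult_analysis[of A x0 _ x0, symmetric]
  by (simp add: vec_eq_iff cnj_cphase_mult_nth)

lemma
  assumes "x0 \<noteq> 0"
  shows lambda2_nonneg: "0 \<le> lambda2 A x0"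
    and norm_ImBadj_le: "norm (ImBadj A x0 *v v) \<le> lambda2 A x0 * norm v"
  using norm_matrix_vector_le_orthogonal_Sup[OF assms ImBadj_mult_x0]
  by (simp_all add: lambda2_def)

definition ImBadj_supp :: "complex^'N^'n \<Rightarrow> real^'n \<Rightarrow> real^'n^'N" where
  "ImBadj_supp A x0 = (\<chi> j i. if 0 < cabs (analysis A x0) $ j then ImBadj A x0 $ j $ i else 0)"

lemma ImBadj_supp_mult_nth:
  "(ImBadj_supp A x0 *v v) $ j = (if 0 < cabs (analysis A x0) $ j then (ImBadj A x0 *v v) $ j else 0)"
  by (simp add: ImBadj_supp_def matrix_vector_mult_def)

lemma norm_ImBadj_supp_le:
  assumes "x0 \<noteq> 0"
  shows "norm (ImBadj_supp A x0 *v v) \<le> lambda2 A x0 * norm v"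
proof -
  have "norm (ImBadj_supp A x0 *v v) \<le> norm (ImBadj A x0 *v v)"
    by (rule norm_le_componentwise_cart) (simp add: ImBadj_supp_mult_nth)
  also have "\<dots> \<le> lambda2 A x0 * norm v" by (rule norm_ImBadj_le[OF assms])
  finally show ?thesis .
qed

text \<open>The derivative at \<open>0\<close> of \<open>d \<mapsto> b \<odot> (A\<^sup>* x0 + d)/|A\<^sup>* x0 + d|\<close>, where
  \<open>b = |A\<^sup>* x0|\<close>, on the support of \<open>b\<close>; off the support that map is \<open>0\<close>.\<close>

definition phase_linear_part :: "complex^'N^'n \<Rightarrow> real^'n \<Rightarrow> complex^'N \<Rightarrow> complex^'N" where
  "phase_linear_part A x0 d = (\<chi> j. if 0 < cabs (analysis A x0) $ j
     then cphase (analysis A x0) $ j * (\<i> * Im (cnj (cphase (analysis A x0) $ j) * d $ j)) else 0)"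

lemma Re_mult_phase_linear_part:
  "(\<chi> i. Re ((A *v phase_linear_part A x0 (analysis A e)) $ i))
     = transpose (ImBadj_supp A x0) *v (ImBadj_supp A x0 *v e)"
proof -
  let ?S = "ImBadj_supp A x0" and ?ph = "cphase (analysis A x0)"
  have "Re (A $ i $ j * phase_linear_part A x0 (analysis A e) $ j) = ?S $ j $ i * (?S *v e) $ j" for i j
  proof (cases "0 < cabs (analysis A x0) $ j")
    case True
    then have "Im (cnj (?ph $ j) * analysis A e $ j) = (?S *v e) $ j"
      by (simp only: ImBadj_supp_mult_nth if_True Im_cnj_cphase_mult_analysis)
    then have L: "phase_linear_part A x0 (analysis A e) $ j = ?ph $ j * (\<i> * (?S *v e) $ j)"
      using True by (simp only: phase_linear_part_def vec_lambda_beta if_True)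
    have S: "?S $ j $ i = - Im (A $ i $ j * ?ph $ j)"
      using True by (simp add: ImBadj_supp_def ImBadj_def Bmat_def adj_def)
    have Re_rotate: "Re (a * (p * (\<i> * q))) = - Im (a * p) * q" for a p :: complex and q :: real
      by (simp add: algebra_simps)
    show ?thesis by (simp only: L S Re_rotate)
  next
    case False
    then show ?thesis by (simp add: phase_linear_part_def ImBadj_supp_def)
  qed
  then show ?thesis
    by (simp add: vec_eq_iff matrix_vector_mult_def transpose_def Re_sum)
qed

lemma cphase_nth_eq_sgn: "y $ j \<noteq> 0 \<Longrightarrow> cphase y $ j = sgn (y $ j)"
  by (simp add: cphase_def sgn_eq)

lemma norm_le_sum_norm_nth: "norm (x :: 'a::real_normed_vector^'n) \<le> (\<Sum>i\<in>UNIV. norm (x $ i))"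
  unfolding norm_vec_def by (rule L2_set_le_sum) simp

lemma power2_norm_vec_eq_sum: "(norm (x :: 'a::real_normed_vector^'n))\<^sup>2 = (\<Sum>i\<in>UNIV. (norm (x $ i))\<^sup>2)"
  unfolding norm_vec_def L2_set_def by (simp add: sum_nonneg)

lemma phase_remainder_le:
  fixes A :: "complex^'N^'n" and x0 x :: "real^'n"
  defines "\<delta> \<equiv> min_pos_entry (cabs (analysis A x0))"
  assumes iso: "A ** adj A = mat 1" and x: "norm (x - x0) \<le> \<delta> / 2"
  shows "norm ((\<chi> j. cabs (analysis A x0) $ j * cphase (analysis A x) $ j) - analysis A x0
            - phase_linear_part A x0 (analysis A (x - x0))) \<le> 4 / \<delta> * (norm (x - x0))\<^sup>2"
    (is "norm ?r \<le> _")
proof -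
  define y0 b ph d where "y0 = analysis A x0" and "b = cabs y0" and "ph = cphase y0"
    and "d = analysis A (x - x0)"
  have \<delta>: "0 < \<delta>" by (simp add: \<delta>_def min_pos_entry_pos)
  have nd: "norm d = norm (x - x0)" by (simp add: d_def norm_adj_mult_isometry[OF iso] norm_cvec)
  have comp: "cmod (?r $ j) \<le> 4 / \<delta> * (cmod (d $ j))\<^sup>2" for j
  proof (cases "0 < b $ j")
    case False
    then have "b $ j = 0" "y0 $ j = 0" by (simp_all add: b_def cabs_def)
    with False \<delta> show ?thesis by (simp add: b_def y0_def phase_linear_part_def)
  next
    case True
    have \<delta>b: "\<delta> \<le> b $ j" using True by (simp add: \<delta>_def b_def y0_def min_pos_entry_le)
    have ph: "cmod (ph $ j) = 1" by (simp add: ph_def norm_cphase_nth)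
    have dj: "cmod (d $ j) \<le> b $ j / 2" using Finite_Cartesian_Product.norm_nth_le[of d j] nd x \<delta>b by linarith
    have y: "analysis A x $ j = ph $ j * b $ j + d $ j"
      by (simp add: d_def ph_def b_def y0_def cvec_diff matrix_vector_mult_diff_distrib cphase_mult_cabs_nth)
    have "b $ j - cmod (d $ j) \<le> cmod (ph $ j * b $ j + d $ j)"
      using norm_diff_ineq[of "ph $ j * b $ j" "d $ j"] ph True by (simp add: norm_mult)
    then have "analysis A x $ j \<noteq> 0" using y dj True by auto
    then have "?r $ j = b $ j * sgn (ph $ j * b $ j + d $ j) - ph $ j * b $ j
                        - ph $ j * (\<i> * Im (cnj (ph $ j) * d $ j))"
      using True y by (simp add: cphase_nth_eq_sgn phase_linear_part_def cphase_mult_cabs_nth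
          b_def ph_def y0_def d_def)
    also have "cmod \<dots> \<le> 4 * (cmod (d $ j))\<^sup>2 / b $ j"
      using ph True dj by (rule cmod_sgn_rotated_linearization)
    also have "\<dots> \<le> 4 * (cmod (d $ j))\<^sup>2 / \<delta>"
      using \<delta>b \<delta> by (intro divide_left_mono) auto
    finally show ?thesis by simp
  qed
  have "norm ?r \<le> (\<Sum>j\<in>UNIV. cmod (?r $ j))" by (rule norm_le_sum_norm_nth)
  also have "\<dots> \<le> (\<Sum>j\<in>UNIV. 4 / \<delta> * (cmod (d $ j))\<^sup>2)" by (rule sum_mono) (rule comp)
  also have "\<dots> = 4 / \<delta> * (norm (x - x0))\<^sup>2" by (simp add: nd[symmetric] power2_norm_vec_eq_sum sum_distrib_left)
  finally show ?thesis .
qed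

lemma norm_projX_diff_le:
  assumes "inX pos x0"
  shows "norm (projX pos z - x0) \<le> norm ((\<chi> i. Re (z $ i)) - x0)"
  using assms by (intro norm_le_componentwise_cart) (auto simp: inX_def projX_def max_def)

lemma PR_map_error_le:
  fixes A :: "complex^'N^'n" and x0 x :: "real^'n"
  defines "\<delta> \<equiv> min_pos_entry (cabs (analysis A x0))"
  assumes iso: "A ** adj A = mat 1" and x0X: "inX pos x0" and x0nz: "x0 \<noteq> 0"
    and x: "norm (x - x0) \<le> \<delta> / 2"
  shows "norm (PR_map pos A x0 x - x0)
           \<le> (lambda2 A x0)\<^sup>2 * norm (x - x0) + 4 / \<delta> * (norm (x - x0))\<^sup>2"
proof -
  define z where "z = (\<chi> j. complex_of_real (cabs (analysis A x0) $ j) * cphase (analysis A x) $ j)"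
  define L where "L = phase_linear_part A x0 (analysis A (x - x0))"
  define r where "r = z - analysis A x0 - L"
  define S where "S = ImBadj_supp A x0"
  have "A *v analysis A x0 = cvec x0" by (simp add: matrix_vector_mul_assoc iso)
  then have "(\<chi> i. Re ((A *v z) $ i)) - x0 = (\<chi> i. Re ((A *v L) $ i)) + (\<chi> i. Re ((A *v r) $ i))"
    by (simp add: r_def matrix_vector_mult_diff_distrib vec_eq_iff cvec_def)
  also have "(\<chi> i. Re ((A *v L) $ i)) = transpose S *v (S *v (x - x0))"
    by (simp add: L_def S_def Re_mult_phase_linear_part)
  finally have decomp: "(\<chi> i. Re ((A *v z) $ i)) - x0 = transpose S *v (S *v (x - x0)) + (\<chi> i. Re ((A *v r) $ i))" .
  have "norm (\<chi> i. Re ((A *v r) $ i)) \<le> norm (A *v r)"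
    by (rule norm_le_componentwise_cart) (simp add: abs_Re_le_cmod)
  also have "\<dots> \<le> norm r" by (rule norm_mult_coisometry_le[OF iso])
  also have "\<dots> \<le> 4 / \<delta> * (norm (x - x0))\<^sup>2"
    unfolding r_def z_def L_def \<delta>_def by (rule phase_remainder_le[OF iso x[unfolded \<delta>_def]])
  finally have Re_r: "norm (\<chi> i. Re ((A *v r) $ i)) \<le> 4 / \<delta> * (norm (x - x0))\<^sup>2" .
  have lin: "norm (transpose S *v (S *v (x - x0))) \<le> (lambda2 A x0)\<^sup>2 * norm (x - x0)"
    unfolding S_def by (intro norm_transpose_mult_le norm_ImBadj_supp_le lambda2_nonneg x0nz)
  have "norm (PR_map pos A x0 x - x0) \<le> norm ((\<chi> i. Re ((A *v z) $ i)) - x0)"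
    unfolding PR_map_def z_def using x0X by (rule norm_projX_diff_le)
  also have "\<dots> \<le> (lambda2 A x0)\<^sup>2 * norm (x - x0) + 4 / \<delta> * (norm (x - x0))\<^sup>2"
    unfolding decomp using norm_triangle_ineq lin Re_r by (rule order_trans[OF _ add_mono])
  finally show ?thesis .
qed

lemma PR_map_local_contraction:
  fixes A :: "complex^'N^'n" and x0 :: "real^'n"
  assumes iso: "A ** adj A = mat 1" and x0X: "inX pos x0" and x0nz: "x0 \<noteq> 0" and \<epsilon>: "0 < \<epsilon>"
  obtains \<delta> where "0 < \<delta>" "\<delta> \<le> norm x0"
    and "\<And>x. norm (x - x0) < \<delta> \<Longrightarrow>
           norm (PR_map pos A x0 x - x0) \<le> ((lambda2 A x0)\<^sup>2 + \<epsilon>) * norm (x - x0)"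
proof
  define d0 where "d0 = min_pos_entry (cabs (analysis A x0))"
  have d0: "0 < d0" by (simp add: d0_def min_pos_entry_pos)
  show "0 < min (min (d0 / 2) (\<epsilon> * d0 / 4)) (norm x0)" using d0 \<epsilon> x0nz by simp
  show "min (min (d0 / 2) (\<epsilon> * d0 / 4)) (norm x0) \<le> norm x0" by simp
  fix x
  assume x: "norm (x - x0) < min (min (d0 / 2) (\<epsilon> * d0 / 4)) (norm x0)"
  have "4 / d0 * (norm (x - x0))\<^sup>2 = (4 / d0 * norm (x - x0)) * norm (x - x0)"
    by (simp add: power2_eq_square)
  also have "\<dots> \<le> \<epsilon> * norm (x - x0)"
    using x d0 by (intro mult_right_mono) (auto simp: field_simps)
  finally have "4 / d0 * (norm (x - x0))\<^sup>2 \<le> \<epsilon> * norm (x - x0)" .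
  moreover have "norm (PR_map pos A x0 x - x0)
      \<le> (lambda2 A x0)\<^sup>2 * norm (x - x0) + 4 / d0 * (norm (x - x0))\<^sup>2"
    unfolding d0_def using x by (intro PR_map_error_le[OF iso x0X x0nz]) (simp add: d0_def)
  ultimately show "norm (PR_map pos A x0 x - x0) \<le> ((lambda2 A x0)\<^sup>2 + \<epsilon>) * norm (x - x0)"
    by (simp add: algebra_simps)
qed

lemma funpow_contraction_stays_close:
  fixes f :: "'a::real_normed_vector \<Rightarrow> 'a"
  assumes c: "c \<le> 1" and f: "\<And>x. norm (x - x0) < \<delta> \<Longrightarrow> norm (f x - x0) \<le> c * norm (x - x0)"
    and x: "norm (x - x0) < \<delta>"
  shows "norm ((f ^^ k) x - x0) < \<delta>"
proof (induction k)
  case (Suc k)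
  have "c * norm ((f ^^ k) x - x0) \<le> norm ((f ^^ k) x - x0)"
    using mult_right_mono[OF c norm_ge_zero] by simp
  with f[OF Suc] Suc show ?case by simp
qed (use x in simp)

lemma alpha_sel_eq_1:
  assumes "norm (x - x0) < norm x0"
  shows "alpha_sel pos x0 x = 1"
proof -
  have "2 * norm x0 \<le> norm (x + x0) + norm (x - x0)"
    using norm_triangle_ineq4[of "x + x0" "x - x0"] by (simp add: scaleR_2[symmetric])
  then have "norm (x - x0) \<le> norm ((-1) *\<^sub>R x - x0)"
    using assms by (simp add: norm_minus_commute[of "- x" x0] add.commute)
  then show ?thesis by (simp add: alpha_sel_def)
qed

theorem mainTheorem11:
  fixes A :: "complex^'N^'n" and x0 :: "real^'n" and pos :: bool
  assumes iso: "A ** adj A = mat 1"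
    and x0X: "inX pos x0" and x0nz: "x0 \<noteq> 0"
    and lam: "lambda2 A x0 < 1"
  shows "\<forall>\<epsilon>. 0 < \<epsilon> \<and> \<epsilon> < 1 - (lambda2 A x0)\<^sup>2 \<longrightarrow>
    (\<exists>U. open U \<and> x0 \<in> U \<and>
      (\<forall>x1\<in>U. \<forall>k::nat. k \<ge> 1 \<longrightarrow>
         norm (alpha_sel pos x0 ((PR_map pos A x0 ^^ k) x1) *\<^sub>R (PR_map pos A x0 ^^ k) x1 - x0)
         \<le> ((lambda2 A x0)\<^sup>2 + \<epsilon>) *
           norm (alpha_sel pos x0 ((PR_map pos A x0 ^^ (k - 1)) x1) *\<^sub>R (PR_map pos A x0 ^^ (k - 1)) x1 - x0)))"
proof (intro allI impI, goal_cases)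
  case (1 \<epsilon>)
  let ?F = "PR_map pos A x0"
  obtain \<delta> where \<delta>: "0 < \<delta>" "\<delta> \<le> norm x0"
    and contr: "\<And>x. norm (x - x0) < \<delta> \<Longrightarrow> norm (?F x - x0) \<le> ((lambda2 A x0)\<^sup>2 + \<epsilon>) * norm (x - x0)"
    using PR_map_local_contraction[OF iso x0X x0nz] 1 by blast
  have close: "norm ((?F ^^ k) x1 - x0) < \<delta>" if "x1 \<in> ball x0 \<delta>" for k x1
    using 1 that by (intro funpow_contraction_stays_close[OF _ contr]) (auto simp: dist_norm norm_minus_commute)
  have alpha: "alpha_sel pos x0 ((?F ^^ k) x1) = 1" if "x1 \<in> ball x0 \<delta>" for k x1
    using close[OF that, of k] \<delta> by (intro alpha_sel_eq_1) simp
  show ?case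
  proof (intro exI[of _ "ball x0 \<delta>"] conjI ballI allI impI, goal_cases)
    case (3 x1 k)
    then have x1: "x1 \<in> ball x0 \<delta>" and "1 \<le> k" by simp_all
    then obtain m where "k = Suc m" by (cases k) auto
    with contr[OF close[OF x1, of m]] alpha[OF x1, of m] alpha[OF x1, of "Suc m"] show ?case
      by simp
  qed (use \<delta> in auto)
qed

end
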